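(* Let $Q$ be a weakly compact convex subset of a Banach space $U$. Let $r>0$, $\beta\in[0,1)$, and let $\{\beta_n\}_n$ be a sequence of real numbers with $\beta_n\to\beta$. Suppose $T:Q\to Q$ satisfies: for all $p,q\in Q$ and $n\geq 1$, $\|p-q\|<r$ implies $\|T^np-T^nq\|\leq\beta_n\|p-q\|$. If there exists $q_0\in Q$ such that the asymptotic radius of $\{T^nq_0\}_n$ relative to $Q$ is less than $r$, then $T$ has a unique fixed point.
   Context: A map as in the statement is called a uniformly asymptotic local contraction. For a bounded sequence $\{x_n\}_n$ in $U$, its asymptotic radius relative to $Q$ is $\inf_{y\in Q}\limsup_{n\to\infty}\|x_n-y\|$. *)

theory Defs
  imports "HOL-Analysis.Analysis"
begin

definition weak_topology :: "'a::real_normed_vector topology" where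
  "weak_topology = topology_generated_by
     {(f -` V) | (f :: 'a \<Rightarrow> real) V. bounded_linear f \<and> open V}"

definition weakly_compact :: "'a::real_normed_vector set \<Rightarrow> bool" where
  "weakly_compact Q \<longleftrightarrow> compactin weak_topology Q"

definition asymptotic_radius :: "'a::real_normed_vector set \<Rightarrow> (nat \<Rightarrow> 'a) \<Rightarrow> ereal" where
  "asymptotic_radius Q x = (INF y\<in>Q. limsup (\<lambda>n. ereal (norm (x n - y))))"

end

theory Submission
  imports Defs
begin

text \<open>On a convex set the local estimate propagates along segments: cutting a segment into
  pieces shorter than \<open>r\<close> shows that every iterate \<open>T\<^sup>n\<close> is globally \<open>\<beta>\<^sub>n\<close>-Lipschitz on \<open>Q\<close>.
  Since \<open>\<beta>\<^sub>n \<rightarrow> \<beta> < 1\<close>, some iterate \<open>T\<^sup>N\<close> is a contraction of \<open>Q\<close>, and \<open>Q\<close> is complete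
  because weakly compact sets are norm closed (continuous functionals separate points, by
  Hahn--Banach). Banach's fixed point theorem gives a unique fixed point of \<open>T\<^sup>N\<close>, and as \<open>T\<close>
  commutes with \<open>T\<^sup>N\<close> it is the unique fixed point of \<open>T\<close>.\<close>

text \<open>Norm-dominated linear functionals on subspaces are handled through their graphs, so that
  extending a functional is set inclusion and Zorn's lemma applies to chains of sets.\<close>

definition dominated_linear_graph :: "('a::real_normed_vector \<times> real) set \<Rightarrow> bool" where
  "dominated_linear_graph G \<longleftrightarrow>
     (0, 0) \<in> G \<and>
     (\<forall>a u b v. (a, u) \<in> G \<longrightarrow> (b, v) \<in> G \<longrightarrow> (a + b, u + v) \<in> G) \<and>
     (\<forall>c a u. (a, u) \<in> G \<longrightarrow> (c *\<^sub>R a, c * u) \<in> G) \<and>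
     (\<forall>a u v. (a, u) \<in> G \<longrightarrow> (a, v) \<in> G \<longrightarrow> u = v) \<and>
     (\<forall>a u. (a, u) \<in> G \<longrightarrow> u \<le> norm a)"

lemma dominated_linear_graphD:
  assumes "dominated_linear_graph G"
  shows dominated_linear_graph_zero: "(0, 0) \<in> G"
    and dominated_linear_graph_add: "(a, u) \<in> G \<Longrightarrow> (b, v) \<in> G \<Longrightarrow> (a + b, u + v) \<in> G"
    and dominated_linear_graph_scaleR: "(a, u) \<in> G \<Longrightarrow> (c *\<^sub>R a, c * u) \<in> G"
    and dominated_linear_graph_unique: "(a, u) \<in> G \<Longrightarrow> (a, v) \<in> G \<Longrightarrow> u = v"
    and dominated_linear_graph_le_norm: "(a, u) \<in> G \<Longrightarrow> u \<le> norm a"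
  using assms unfolding dominated_linear_graph_def by blast+

lemma dominated_linear_graph_diff:
  assumes "dominated_linear_graph G" "(a, u) \<in> G" "(b, v) \<in> G"
  shows "(a - b, u - v) \<in> G"
  using dominated_linear_graph_add[OF assms(1,2) dominated_linear_graph_scaleR[OF assms(1,3), of "-1"]]
  by simp

lemma dominated_linear_graph_extension_bound:
  assumes G: "dominated_linear_graph G"
  obtains c where "\<And>a u. (a, u) \<in> G \<Longrightarrow> u - norm (a - y) \<le> c"
    and "\<And>b v. (b, v) \<in> G \<Longrightarrow> c \<le> norm (b + y) - v"
proof -
  have separated: "u - norm (a - y) \<le> norm (b + y) - v" if "(a, u) \<in> G" "(b, v) \<in> G" for a u b v
  proof -
    have "u + v \<le> norm ((a - y) + (b + y))"
      using dominated_linear_graph_le_norm[OF G dominated_linear_graph_add[OF G that]] by simp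
    also have "\<dots> \<le> norm (a - y) + norm (b + y)" by (rule norm_triangle_ineq)
    finally show ?thesis by simp
  qed
  define S where "S = {u - norm (a - y) | a u. (a, u) \<in> G}"
  have "S \<noteq> {}" using dominated_linear_graph_zero[OF G] unfolding S_def by blast
  moreover have "bdd_above S"
    unfolding S_def bdd_above_def using separated[OF _ dominated_linear_graph_zero[OF G]] by fastforce
  ultimately show ?thesis
    using separated by (intro that[of "Sup S"] cSup_upper cSup_least) (auto simp: S_def)
qed

lemma dominated_linear_graph_extension:
  assumes G: "dominated_linear_graph G" and y: "\<And>u. (y, u) \<notin> G"
    and lower: "\<And>a u. (a, u) \<in> G \<Longrightarrow> u - norm (a - y) \<le> c"
    and upper: "\<And>b v. (b, v) \<in> G \<Longrightarrow> c \<le> norm (b + y) - v"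
  shows "dominated_linear_graph {(a + t *\<^sub>R y, u + t * c) | a u t. (a, u) \<in> G}"
    (is "dominated_linear_graph ?G'")
  unfolding dominated_linear_graph_def
proof (intro conjI allI impI)
  show "(0, 0) \<in> ?G'"
    using dominated_linear_graph_zero[OF G] by force
next
  fix a u b v assume "(a, u) \<in> ?G'" "(b, v) \<in> ?G'"
  then obtain a1 u1 t1 a2 u2 t2 where "(a1, u1) \<in> G" "(a2, u2) \<in> G"
    "a = a1 + t1 *\<^sub>R y" "u = u1 + t1 * c" "b = a2 + t2 *\<^sub>R y" "v = u2 + t2 * c"
    by blast
  then show "(a + b, u + v) \<in> ?G'"
    by (intro CollectI exI[of _ "a1 + a2"] exI[of _ "u1 + u2"] exI[of _ "t1 + t2"])
      (auto simp: dominated_linear_graph_add[OF G] algebra_simps)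
next
  fix d a u assume "(a, u) \<in> ?G'"
  then obtain a1 u1 t where "(a1, u1) \<in> G" "a = a1 + t *\<^sub>R y" "u = u1 + t * c"
    by blast
  then show "(d *\<^sub>R a, d * u) \<in> ?G'"
    by (intro CollectI exI[of _ "d *\<^sub>R a1"] exI[of _ "d * u1"] exI[of _ "d * t"])
      (auto simp: dominated_linear_graph_scaleR[OF G] algebra_simps)
next
  fix a u v assume "(a, u) \<in> ?G'" "(a, v) \<in> ?G'"
  then obtain a1 u1 t1 a2 u2 t2 where in_G: "(a1, u1) \<in> G" "(a2, u2) \<in> G"
    and eqs: "a = a1 + t1 *\<^sub>R y" "u = u1 + t1 * c" "a = a2 + t2 *\<^sub>R y" "v = u2 + t2 * c"
    by blast
  have "t1 = t2"
  proof (rule ccontr)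
    assume "t1 \<noteq> t2"
    moreover have "a1 - a2 = (t2 - t1) *\<^sub>R y"
      using eqs by (simp add: algebra_simps)
    ultimately have "(1 / (t2 - t1)) *\<^sub>R (a1 - a2) = y"
      by simp
    then show False
      using y dominated_linear_graph_scaleR[OF G dominated_linear_graph_diff[OF G in_G]] by metis
  qed
  then show "u = v"
    using eqs dominated_linear_graph_unique[OF G in_G(1)] in_G(2) by auto
next
  fix a u assume "(a, u) \<in> ?G'"
  then obtain a1 u1 t where in_G: "(a1, u1) \<in> G" and eqs: "a = a1 + t *\<^sub>R y" "u = u1 + t * c"
    by blast
  consider "t = 0" | "t > 0" | "t < 0" by linarith
  then show "u \<le> norm a"
  proof cases
    case 1
    then show ?thesis using dominated_linear_graph_le_norm[OF G in_G] eqs by simp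
  next
    case 2
    have "c \<le> norm ((1 / t) *\<^sub>R a1 + y) - (1 / t) * u1"
      using upper[OF dominated_linear_graph_scaleR[OF G in_G]] .
    then have "t * c \<le> t * norm ((1 / t) *\<^sub>R a1 + y) - u1"
      using 2 by (simp add: field_simps)
    moreover have "t *\<^sub>R ((1 / t) *\<^sub>R a1 + y) = a"
      using 2 eqs by (simp add: scaleR_add_right)
    then have "norm a = t * norm ((1 / t) *\<^sub>R a1 + y)"
      using 2 by (metis norm_scaleR abs_of_pos)
    ultimately show ?thesis using eqs by linarith
  next
    case 3
    have "- (1 / t) * u1 - norm (- (1 / t) *\<^sub>R a1 - y) \<le> c"
      using lower[OF dominated_linear_graph_scaleR[OF G in_G]] .
    then have "u1 - (- t) * norm (- (1 / t) *\<^sub>R a1 - y) \<le> - t * c"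
      using 3 by (simp add: field_simps)
    moreover have "(- t) *\<^sub>R (- (1 / t) *\<^sub>R a1 - y) = a"
      using 3 eqs by (simp add: algebra_simps)
    then have "norm a = (- t) * norm (- (1 / t) *\<^sub>R a1 - y)"
      using 3 by (metis norm_scaleR abs_of_pos neg_0_less_iff_less)
    ultimately show ?thesis using eqs by linarith
  qed
qed

lemma dominated_linear_graph_Union_chain:
  assumes "C \<noteq> {}" and "chain\<^sub>\<subseteq> C" and graphs: "\<And>G. G \<in> C \<Longrightarrow> dominated_linear_graph G"
  shows "dominated_linear_graph (\<Union>C)"
proof -
  have common: "\<exists>G\<in>C. p \<in> G \<and> q \<in> G" if "p \<in> \<Union>C" "q \<in> \<Union>C" for p q
    using that \<open>chain\<^sub>\<subseteq> C\<close> unfolding chain_subset_def by blast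
  show ?thesis
    unfolding dominated_linear_graph_def
  proof (intro conjI allI impI)
    show "(0, 0) \<in> \<Union>C"
      using \<open>C \<noteq> {}\<close> graphs dominated_linear_graph_zero by blast
  next
    fix a u b v assume "(a, u) \<in> \<Union>C" "(b, v) \<in> \<Union>C"
    then show "(a + b, u + v) \<in> \<Union>C"
      using common graphs dominated_linear_graph_add by blast
  next
    fix c a u assume "(a, u) \<in> \<Union>C"
    then show "(c *\<^sub>R a, c * u) \<in> \<Union>C"
      using graphs dominated_linear_graph_scaleR by blast
  next
    fix a u v assume "(a, u) \<in> \<Union>C" "(a, v) \<in> \<Union>C"
    then show "u = v"
      using common graphs dominated_linear_graph_unique by meson
  next
    fix a u assume "(a, u) \<in> \<Union>C"
    then show "u \<le> norm a"
      using graphs dominated_linear_graph_le_norm by blast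
  qed
qed

lemma dominated_linear_graph_maximal_total:
  assumes G0: "dominated_linear_graph G0"
  obtains M where "dominated_linear_graph M" "G0 \<subseteq> M" "\<And>a. \<exists>u. (a, u) \<in> M"
proof -
  define A where "A = {G. dominated_linear_graph G \<and> G0 \<subseteq> G}"
  have "\<forall>C\<in>chains A. \<exists>U\<in>A. \<forall>X\<in>C. X \<subseteq> U"
  proof
    fix C assume C: "C \<in> chains A"
    show "\<exists>U\<in>A. \<forall>X\<in>C. X \<subseteq> U"
    proof (cases "C = {}")
      case True
      then show ?thesis using G0 unfolding A_def by blast
    next
      case False
      have "dominated_linear_graph (\<Union>C)"
        using C False by (intro dominated_linear_graph_Union_chain) (auto simp: A_def chains_def)
      moreover have "G0 \<subseteq> \<Union>C"
        using C False by (auto simp: A_def chains_def)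
      ultimately show ?thesis unfolding A_def by blast
    qed
  qed
  from Zorn_Lemma2[OF this] obtain M where M: "M \<in> A" and maximal: "\<forall>X\<in>A. M \<subseteq> X \<longrightarrow> X = M"
    by blast
  have graph: "dominated_linear_graph M" and "G0 \<subseteq> M"
    using M unfolding A_def by auto
  moreover have "\<exists>u. (y, u) \<in> M" for y
  proof (rule ccontr)
    assume y: "\<nexists>u. (y, u) \<in> M"
    obtain c where "\<And>a u. (a, u) \<in> M \<Longrightarrow> u - norm (a - y) \<le> c"
      and "\<And>b v. (b, v) \<in> M \<Longrightarrow> c \<le> norm (b + y) - v"
      using dominated_linear_graph_extension_bound[OF graph, where y = y] by blast
    then have extension: "dominated_linear_graph {(a + t *\<^sub>R y, u + t * c) | a u t. (a, u) \<in> M}"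
      (is "dominated_linear_graph ?M'")
      by (intro dominated_linear_graph_extension[OF graph]) (use y in auto)
    have "M \<subseteq> ?M'"
    proof
      fix p assume "p \<in> M"
      then show "p \<in> ?M'"
        by (intro CollectI exI[of _ "fst p"] exI[of _ "snd p"] exI[of _ 0]) simp
    qed
    moreover have "?M' \<in> A"
      using extension \<open>G0 \<subseteq> M\<close> \<open>M \<subseteq> ?M'\<close> unfolding A_def by simp
    ultimately have "?M' = M"
      using maximal by simp
    moreover have "(y, c) \<in> ?M'"
      using dominated_linear_graph_zero[OF graph]
      by (intro CollectI exI[of _ 0] exI[of _ 0] exI[of _ 1]) simp
    ultimately show False
      using y by blast
  qed
  ultimately show ?thesis using that by blast
qed

lemma total_dominated_linear_graph_functional:
  assumes M: "dominated_linear_graph M" and total: "\<And>a. \<exists>u. (a, u) \<in> M"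
  obtains f where "bounded_linear f" "\<And>a u. (a, u) \<in> M \<Longrightarrow> f a = u"
proof -
  define f where "f a = (THE u. (a, u) \<in> M)" for a
  have f_eq: "f a = u" if "(a, u) \<in> M" for a u
    unfolding f_def using that by (auto intro: dominated_linear_graph_unique[OF M])
  have in_M: "(a, f a) \<in> M" for a
    using total[of a] f_eq by metis
  have "bounded_linear f"
  proof (rule bounded_linear_intro[where K = 1])
    show "f (a + b) = f a + f b" for a b
      using f_eq dominated_linear_graph_add[OF M in_M in_M] .
    show "f (c *\<^sub>R a) = c *\<^sub>R f a" for c a
      using f_eq dominated_linear_graph_scaleR[OF M in_M] by simp
    show "norm (f a) \<le> norm a * 1" for a
    proof -
      have "f (- a) = - f a"
        using f_eq dominated_linear_graph_scaleR[OF M in_M, of "-1" a] by simp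
      then show ?thesis
        using dominated_linear_graph_le_norm[OF M in_M, of a]
          dominated_linear_graph_le_norm[OF M in_M, of "- a"] by simp
    qed
  qed
  then show ?thesis using that f_eq by blast
qed

lemma exists_bounded_linear_norm_eq:
  fixes x :: "'a::real_normed_vector"
  obtains f :: "'a \<Rightarrow> real" where "bounded_linear f" "f x = norm x"
proof (cases "x = 0")
  case True
  then show ?thesis using that[of "\<lambda>_. 0"] by simp
next
  case False
  have zero_graph: "dominated_linear_graph {(0 :: 'a, 0 :: real)}"
    unfolding dominated_linear_graph_def by simp
  have line: "dominated_linear_graph {(t *\<^sub>R x, t * norm x) | t. True}"
    using dominated_linear_graph_extension[OF zero_graph, of x "norm x"] False by simp
  obtain M where M: "dominated_linear_graph M"
    and line_M: "{(t *\<^sub>R x, t * norm x) | t. True} \<subseteq> M" and total: "\<And>a. \<exists>u. (a, u) \<in> M"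
    using dominated_linear_graph_maximal_total[OF line] by blast
  have "(x, norm x) \<in> M"
    using line_M by (force intro: exI[of _ 1])
  obtain f where "bounded_linear f" "\<And>a u. (a, u) \<in> M \<Longrightarrow> f a = u"
    using total_dominated_linear_graph_functional[OF M total] by blast
  then show ?thesis
    using that \<open>(x, norm x) \<in> M\<close> by blast
qed

lemma openin_weak_topology_vimage:
  fixes f :: "'a::real_normed_vector \<Rightarrow> real"
  assumes "bounded_linear f" "open V"
  shows "openin weak_topology (f -` V)"
  unfolding weak_topology_def
  by (rule topology_generated_by_Basis) (use assms in blast)

lemma weakly_compact_imp_closed:
  fixes Q :: "'a::real_normed_vector set"
  assumes "weakly_compact Q"
  shows "closed Q"
proof -
  have "\<exists>T. open T \<and> x \<in> T \<and> T \<subseteq> - Q" if "x \<in> - Q" for x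
  proof -
    have "\<forall>q. \<exists>f. bounded_linear f \<and> f (q - x) = norm (q - x)"
    proof
      fix q
      obtain f :: "'a \<Rightarrow> real" where "bounded_linear f" "f (q - x) = norm (q - x)"
        by (rule exists_bounded_linear_norm_eq)
      then show "\<exists>f. bounded_linear f \<and> f (q - x) = norm (q - x)" by blast
    qed
    from choice[OF this] obtain F
      where F_bl: "\<And>q. bounded_linear (F q)" and F_eq: "\<And>q. F q (q - x) = norm (q - x)"
      by blast
    have F_diff: "F q q - F q x = norm (q - x)" for q
      using F_eq linear_diff[OF bounded_linear.linear[OF F_bl]] by metis
    define d where "d q = norm (q - x) / 2" for q
    define W where "W q = F q -` ball (F q q) (d q)" for q
    have "\<forall>U\<in>W ` Q. openin weak_topology U"
      unfolding W_def using F_bl by (auto intro: openin_weak_topology_vimage)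
    moreover have "Q \<subseteq> \<Union>(W ` Q)"
    proof
      fix q assume "q \<in> Q"
      then have "d q > 0"
        using \<open>x \<in> - Q\<close> by (auto simp: d_def)
      then have "q \<in> W q"
        by (simp add: W_def)
      then show "q \<in> \<Union>(W ` Q)"
        using \<open>q \<in> Q\<close> by blast
    qed
    ultimately obtain \<F> where "finite \<F>" "\<F> \<subseteq> W ` Q" "Q \<subseteq> \<Union>\<F>"
      using assms unfolding weakly_compact_def compactin_def by meson
    then obtain K where K: "finite K" "K \<subseteq> Q" "Q \<subseteq> (\<Union>q\<in>K. W q)"
      using finite_subset_image by metis
    define V where "V = (\<Inter>q\<in>K. F q -` ball (F q x) (d q))"
    have "open V"
      unfolding V_def using K(1) F_bl
      by (intro open_INT ballI continuous_open_vimage open_ball linear_continuous_at) auto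
    moreover have "x \<in> V"
      using K(2) \<open>x \<in> - Q\<close> by (auto simp: V_def d_def)
    moreover have "V \<subseteq> - Q"
    proof
      fix z assume "z \<in> V"
      show "z \<in> - Q"
      proof
        assume "z \<in> Q"
        then obtain q where "q \<in> K" "dist (F q q) (F q z) < d q"
          using K(3) by (auto simp: W_def)
        moreover have "dist (F q x) (F q z) < d q"
          using \<open>z \<in> V\<close> \<open>q \<in> K\<close> by (auto simp: V_def)
        ultimately have "norm (q - x) < 2 * d q"
          using F_diff[of q] by (simp add: dist_real_def)
        then show False by (simp add: d_def)
      qed
    qed
    ultimately show ?thesis by blast
  qed
  then show ?thesis
    unfolding closed_def by (rule Topological_Spaces.openI)
qed

lemma convex_local_lipschitz_imp_lipschitz:
  fixes g :: "'a::real_normed_vector \<Rightarrow> 'b::real_normed_vector"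
  assumes "convex Q" and "r > 0"
    and local: "\<And>p q. p \<in> Q \<Longrightarrow> q \<in> Q \<Longrightarrow> norm (p - q) < r \<Longrightarrow> norm (g p - g q) \<le> b * norm (p - q)"
    and "x \<in> Q" "y \<in> Q"
  shows "norm (g x - g y) \<le> b * norm (x - y)"
proof -
  obtain k :: nat where k: "norm (x - y) / r < real k"
    using reals_Archimedean2 by blast
  moreover have "0 \<le> norm (x - y) / r"
    using \<open>r > 0\<close> by simp
  ultimately have "k > 0"
    by simp
  define h where "h = norm (x - y) / real k"
  define z where "z i = x + (real i / real k) *\<^sub>R (y - x)" for i
  have z_in: "z i \<in> Q" if "i \<le> k" for i
  proof -
    have "z i = (1 - real i / real k) *\<^sub>R x + (real i / real k) *\<^sub>R y"
      by (simp add: z_def algebra_simps)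
    then show ?thesis
      using convexD[OF \<open>convex Q\<close> \<open>x \<in> Q\<close> \<open>y \<in> Q\<close>] that \<open>k > 0\<close> by simp
  qed
  have z_step: "norm (z i - z (Suc i)) = h" for i
  proof -
    have "z (Suc i) - z i = (1 / real k) *\<^sub>R (y - x)"
      by (simp add: z_def diff_divide_distrib[symmetric] scaleR_diff_left[symmetric])
    then have "norm (z (Suc i) - z i) = norm (y - x) / real k"
      by simp
    then show ?thesis
      by (simp add: h_def norm_minus_commute)
  qed
  have "h < r"
    using k \<open>r > 0\<close> \<open>k > 0\<close> by (simp add: h_def field_simps)
  have "norm (g x - g (z i)) \<le> b * (real i * h)" if "i \<le> k" for i
    using that
  proof (induction i)
    case 0
    then show ?case by (simp add: z_def)
  next
    case (Suc i)
    have "norm (g x - g (z (Suc i))) \<le> norm (g x - g (z i)) + norm (g (z i) - g (z (Suc i)))"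
      using norm_triangle_ineq[of "g x - g (z i)" "g (z i) - g (z (Suc i))"] by simp
    also have "\<dots> \<le> b * (real i * h) + b * h"
      using Suc local[OF z_in z_in, of i "Suc i"] z_step[of i] \<open>h < r\<close> by simp
    finally show ?case
      by (simp add: algebra_simps)
  qed
  from this[of k] show ?thesis
    using \<open>k > 0\<close> by (simp add: z_def h_def)
qed

lemma unique_fixpoint_of_funpow:
  assumes "T ` Q \<subseteq> Q" and "\<exists>!x. x \<in> Q \<and> (T ^^ n) x = x"
  shows "\<exists>!x. x \<in> Q \<and> T x = x"
proof -
  obtain x where x: "x \<in> Q" "(T ^^ n) x = x"
    and unique: "\<And>y. y \<in> Q \<Longrightarrow> (T ^^ n) y = y \<Longrightarrow> y = x"
    using assms(2) by blast
  have "(T ^^ n) (T x) = T x"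
    using x(2) by (metis funpow_swap1)
  then have "T x = x"
    using unique assms(1) x(1) by blast
  moreover have "y = x" if "y \<in> Q" "T y = y" for y
  proof -
    have "(T ^^ n) y = y"
      using \<open>T y = y\<close> by (induction n) auto
    then show ?thesis using unique \<open>y \<in> Q\<close> by blast
  qed
  ultimately show ?thesis using x(1) by blast
qed

theorem mainTheorem6:
  fixes Q :: "'a::banach set" and T :: "'a \<Rightarrow> 'a"
    and r \<beta> :: real and \<beta>s :: "nat \<Rightarrow> real"
  assumes "weakly_compact Q" and "convex Q"
    and "r > 0" and "0 \<le> \<beta>" and "\<beta> < 1" and "\<beta>s \<longlonglongrightarrow> \<beta>"
    and "T ` Q \<subseteq> Q"
    and "\<And>p q n. p \<in> Q \<Longrightarrow> q \<in> Q \<Longrightarrow> n \<ge> 1 \<Longrightarrow> norm (p - q) < r \<Longrightarrow>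
           norm ((T ^^ n) p - (T ^^ n) q) \<le> \<beta>s n * norm (p - q)"
    and "\<exists>q0\<in>Q. asymptotic_radius Q (\<lambda>n. (T ^^ n) q0) < ereal r"
  shows "\<exists>!x. x \<in> Q \<and> T x = x"
proof -
  have "\<forall>\<^sub>F n in sequentially. n \<ge> 1 \<and> \<beta>s n < 1"
    using eventually_ge_at_top order_tendstoD(2)[OF \<open>\<beta>s \<longlonglongrightarrow> \<beta>\<close> \<open>\<beta> < 1\<close>]
    by (rule eventually_conj)
  then obtain N where "N \<ge> 1" "\<beta>s N < 1"
    using eventually_happens'[OF sequentially_bot] by blast
  define c where "c = max (\<beta>s N) 0"
  have maps: "(T ^^ N) ` Q \<subseteq> Q"
    using \<open>T ` Q \<subseteq> Q\<close> by (induction N) auto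
  have contraction: "dist ((T ^^ N) p) ((T ^^ N) q) \<le> c * dist p q" if "p \<in> Q" "q \<in> Q" for p q
  proof -
    have "norm ((T ^^ N) p - (T ^^ N) q) \<le> \<beta>s N * norm (p - q)"
      using convex_local_lipschitz_imp_lipschitz[OF \<open>convex Q\<close> \<open>r > 0\<close> _ that] assms(8) \<open>N \<ge> 1\<close>
      by blast
    then show ?thesis
      by (simp add: c_def dist_norm) (meson max.cobounded1 mult_right_mono norm_ge_zero order_trans)
  qed
  have "complete Q"
    using weakly_compact_imp_closed[OF \<open>weakly_compact Q\<close>] by (simp add: complete_eq_closed)
  \<comment> \<open>Convexity already makes the local estimate global.\<close>
  moreover have "Q \<noteq> {}"
    using assms(9) by blast
  moreover have "0 \<le> c" "c < 1"
    using \<open>\<beta>s N < 1\<close> by (auto simp: c_def)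
  ultimately have "\<exists>!x. x \<in> Q \<and> (T ^^ N) x = x"
    using Banach_fix[OF _ _ _ _ maps contraction] by blast
  then show ?thesis
    using unique_fixpoint_of_funpow[OF \<open>T ` Q \<subseteq> Q\<close>] by blast
qed

end
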